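(* In an execution of Algorithm A2 (described in the context) with $n>3t$ and a strong $(t+1)$ common coin, suppose some non-faulty process decides $v\in\{0,1\}$ in round $r$. Then at every non-faulty process: (i) in every round $\rho\ge r$, the flag $\mathit{ptr}[v]$ (eventually) equals $\mathit{true}$, and no non-faulty process decides $\neg v$; (ii) in every round $\rho>r$, the flag $\mathit{ptr}[\neg v]$ is $\mathit{false}$ (never becomes true).
   Context: System model: $n$ asynchronous sequential processes $p_1,\dots,p_n$, of which at most $t$ are Byzantine (behave arbitrarily, may collude); the others are non-faulty. Processes communicate over reliable asynchronous point-to-point channels between every pair: messages between non-faulty processes are eventually delivered, unaltered, not duplicated, and the receiver knows the identity of the sender; there is no bound on delays and the adversary controls delivery order. "Broadcast $m$" means sending $m$ to every process (including oneself). When counting messages "received from $k$ distinct processes", at most one message per sender is counted. S-Broadcast with tag $T$, value $v$ and Boolean $\mathit{sb}_i$ at process $p_i$: set the Boolean flag $\mathit{sval}_i\leftarrow\mathit{false}$; if $\mathit{sb}_i=\mathit{true}$, broadcast $\mathrm{SVAL}(T,v)$; return a reference to $\mathit{sval}_i$ (which may later become true). In the background (only for messages carrying this same value $v$): when $\mathrm{SVAL}(T,v)$ has been received from $t+1$ distinct processes and $p_i$ has not yet broadcast $\mathrm{SVAL}(T,v)$, $p_i$ broadcasts $\mathrm{SVAL}(T,v)$; when $\mathrm{SVAL}(T,v)$ has been received from $2t+1$ distinct processes, $p_i$ sets $\mathit{sval}_i\leftarrow\mathit{true}$. Instances with different (tag, value) pairs are independent. Strong $(t+1)$ common coin: for each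 round $r$, a call $\mathsf{random}()$ in round $r$ returns the same uniformly random bit to every non-faulty caller; this bit is unpredictable and is not revealed to anyone before at least $t+1$ non-faulty processes have called $\mathsf{random}()$ in round $r$. Algorithm A2 (binary consensus), at non-faulty $p_i$ proposing $v_i\in\{0,1\}$, with a two-entry array $\mathit{ptr}[0],\mathit{ptr}[1]$ of references to Boolean flags: set $s\leftarrow\neg v_i$, $r\leftarrow0$, $\mathit{support}\leftarrow\mathit{false}$; $\mathit{ptr}[s]\leftarrow$ S-Broadcast with tag $\mathrm{EST}[1]$, value $s$, Boolean $\mathit{false}$. Repeat forever: (1) $r\leftarrow r+1$. (2) $\mathit{ptr}[\neg s]\leftarrow$ S-Broadcast with tag $\mathrm{EST}[r]$, value $\neg s$, Boolean $\neg\mathit{support}$ (the entry $\mathit{ptr}[s]$ is left unchanged, still referring to an earlier instance). (3) Wait until $\mathit{ptr}[0]=\mathit{true}$ or $\mathit{ptr}[1]=\mathit{true}$. (4) If $\mathit{support}=\mathit{true}$ then $w\leftarrow s$; else if $\mathit{ptr}[0]=\mathit{true}$ then $w\leftarrow0$; else ($\mathit{ptr}[1]=\mathit{true}$) $w\leftarrow1$. (5) Broadcast $\mathrm{AUX}(r,w)$. (6) Wait until there are $n-t$ distinct processes $p_j$ from which a message $\mathrm{AUX}(r,w_j)$ has been received with $\mathit{ptr}[w_j]=\mathit{true}$; let $\mathit{view}$ be the set of these values $w_j$. (7) $s\leftarrow\mathsf{random}()$. (8) If $\mathit{view}=\{s\}$: $\mathit{support}\leftarrow\mathit{true}$ and decide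 $s$ if not yet decided; else if $\mathit{view}=\{0,1\}$: $\mathit{support}\leftarrow\mathit{true}$; else $\mathit{support}\leftarrow\mathit{false}$. ($\neg$ denotes bit negation.) *)

theory Defs
  imports Main
begin

text \<open>Processes are 0..n-1; F is the set of Byzantine processes.
  Binary values are booleans (False = 0, True = 1).
  The tag EST[T] is represented by the round number T.\<close>

datatype msg = SVAL nat bool | AUX nat bool

text \<open>At3: waiting at step (3) of the current round;
  At6: waiting at step (6) of the current round (AUX already broadcast).\<close>
datatype pcl = At3 | At6

text \<open>Local state of a non-faulty process.  ptr x = T means that the
  reference ptr[x] points to the S-Broadcast instance with tag EST[T] and value x.
  dec = Some (v, r) means: decided v in round r.  inv = S-Broadcast instances
  invoked so far, svsent = instances for which SVAL has been broadcast,
  rcv = set of (sender, message) pairs received.\<close>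
record lstate =
  rnd :: nat
  est :: bool
  supp :: bool
  ptr :: "bool \<Rightarrow> nat"
  pc :: pcl
  dec :: "(bool \<times> nat) option"
  inv :: "(nat \<times> bool) set"
  svsent :: "(nat \<times> bool) set"
  rcv :: "(nat \<times> msg) set"

text \<open>Global state: local states and the set of all (sender, receiver, message)
  triples sent so far.\<close>
record gstate =
  loc :: "nat \<Rightarrow> lstate"
  net :: "(nat \<times> nat \<times> msg) set"

definition bcast :: "nat \<Rightarrow> nat \<Rightarrow> msg \<Rightarrow> (nat \<times> nat \<times> msg) set" where
  "bcast n i m = {(i, k, m) | k. k < n}"

definition cnt :: "nat \<Rightarrow> lstate \<Rightarrow> nat \<Rightarrow> bool \<Rightarrow> nat" where
  "cnt n l T x = card {q. q < n \<and> (q, SVAL T x) \<in> rcv l}"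

text \<open>Value of the Boolean flag of the S-Broadcast instance (EST[T], x).\<close>
definition sval :: "nat \<Rightarrow> nat \<Rightarrow> lstate \<Rightarrow> nat \<Rightarrow> bool \<Rightarrow> bool" where
  "sval n t l T x = (2 * t + 1 \<le> cnt n l T x)"

definition flag :: "nat \<Rightarrow> nat \<Rightarrow> lstate \<Rightarrow> bool \<Rightarrow> bool" where
  "flag n t l x = sval n t l (ptr l x) x"

text \<open>Background task of S-Broadcast: relay SVAL(T,x) once received from t+1
  distinct processes (only for invoked instances, at most once).\<close>
definition relay_set :: "nat \<Rightarrow> nat \<Rightarrow> lstate \<Rightarrow> (nat \<times> bool) set" where
  "relay_set n t l = {(T, x). (T, x) \<in> inv l \<and> t + 1 \<le> cnt n l T x \<and> (T, x) \<notin> svsent l}"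

definition relay :: "nat \<Rightarrow> nat \<Rightarrow> nat \<Rightarrow> gstate \<Rightarrow> gstate" where
  "relay n t i g =
     (let l = loc g i; R = relay_set n t l in
      g\<lparr>loc := (loc g)(i := l\<lparr>svsent := svsent l \<union> R\<rparr>),
        net := net g \<union> (\<Union>(T, x)\<in>R. bcast n i (SVAL T x))\<rparr>)"

text \<open>Invocation of S-Broadcast with tag EST[T], value x and Boolean b by process i.
  (The returned reference is stored in ptr by the caller.)\<close>
definition sbcast :: "nat \<Rightarrow> nat \<Rightarrow> nat \<Rightarrow> nat \<Rightarrow> bool \<Rightarrow> bool \<Rightarrow> gstate \<Rightarrow> gstate" where
  "sbcast n t i T x b g = relay n t i
     (let l = loc g i in
      g\<lparr>loc := (loc g)(i := l\<lparr>inv := insert (T, x) (inv l),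
                               svsent := (if b then insert (T, x) (svsent l) else svsent l)\<rparr>),
        net := (if b then net g \<union> bcast n i (SVAL T x) else net g)\<rparr>)"

text \<open>Initial state: every non-faulty process has executed the initialisation and
  steps (1)-(2) of round 1.\<close>
definition init_state :: "nat \<Rightarrow> nat set \<Rightarrow> (nat \<Rightarrow> bool) \<Rightarrow> gstate \<Rightarrow> bool" where
  "init_state n F props g =
     ((\<forall>i. i < n \<and> i \<notin> F \<longrightarrow>
         loc g i = \<lparr>rnd = 1, est = \<not> props i, supp = False, ptr = (\<lambda>_. 1), pc = At3,
                    dec = None, inv = {(1, \<not> props i), (1, props i)},
                    svsent = {(1, props i)}, rcv = {}\<rparr>)
      \<and> net g = (\<Union>i\<in>{i. i < n \<and> i \<notin> F}. bcast n i (SVAL 1 (props i))))"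

text \<open>Steps (3)-(5).\<close>
definition step3 :: "nat \<Rightarrow> nat \<Rightarrow> nat \<Rightarrow> gstate \<Rightarrow> gstate \<Rightarrow> bool" where
  "step3 n t i g g' =
     (let l = loc g i in
      pc l = At3 \<and> (flag n t l False \<or> flag n t l True) \<and>
      (let w = (if supp l then est l else if flag n t l False then False else True) in
       g' = g\<lparr>loc := (loc g)(i := l\<lparr>pc := At6\<rparr>),
              net := net g \<union> bcast n i (AUX (rnd l) w)\<rparr>))"

text \<open>Wait condition of step (6) for a choice of n-t distinct senders S with values ws.\<close>
definition view_ok :: "nat \<Rightarrow> nat \<Rightarrow> lstate \<Rightarrow> nat set \<Rightarrow> (nat \<Rightarrow> bool) \<Rightarrow> bool" where
  "view_ok n t l S ws =
     (S \<subseteq> {..<n} \<and> card S = n - t \<and>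
      (\<forall>j\<in>S. (j, AUX (rnd l) (ws j)) \<in> rcv l \<and> flag n t l (ws j)))"

text \<open>Steps (6)-(8) of round r followed by steps (1)-(2) of round r+1.\<close>
definition step6 :: "nat \<Rightarrow> nat \<Rightarrow> (nat \<Rightarrow> bool) \<Rightarrow> nat \<Rightarrow> gstate \<Rightarrow> gstate \<Rightarrow> bool" where
  "step6 n t coin i g g' =
     (let l = loc g i in
      pc l = At6 \<and>
      (\<exists>S ws. view_ok n t l S ws \<and>
        (let view = ws ` S; s = coin (rnd l);
             sp = (view = {s} \<or> view = {False, True});
             d = (if view = {s} \<and> dec l = None then Some (s, rnd l) else dec l);
             r' = Suc (rnd l);
             l1 = l\<lparr>rnd := r', est := s, supp := sp, dec := d, pc := At3,
                    ptr := (ptr l)(\<not> s := r')\<rparr>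
         in g' = sbcast n t i r' (\<not> s) (\<not> sp) (g\<lparr>loc := (loc g)(i := l1)\<rparr>))))"

definition enabled :: "nat \<Rightarrow> nat \<Rightarrow> nat \<Rightarrow> gstate \<Rightarrow> bool" where
  "enabled n t i g =
     (let l = loc g i in
      (pc l = At3 \<and> (flag n t l False \<or> flag n t l True)) \<or>
      (pc l = At6 \<and> (\<exists>S ws. view_ok n t l S ws)))"

text \<open>Delivery of a message (j -> i, m) to a non-faulty process i, followed
  atomically by the background S-Broadcast reactions.\<close>
definition deliver :: "nat \<Rightarrow> nat \<Rightarrow> nat set \<Rightarrow> gstate \<Rightarrow> gstate \<Rightarrow> bool" where
  "deliver n t F g g' =
     (\<exists>j i m. i < n \<and> i \<notin> F \<and> (j, i, m) \<in> net g \<and> (j, m) \<notin> rcv (loc g i) \<and>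
        g' = relay n t i (g\<lparr>loc := (loc g)(i := (loc g i)\<lparr>rcv := insert (j, m) (rcv (loc g i))\<rparr>)\<rparr>))"

definition byz :: "nat \<Rightarrow> nat set \<Rightarrow> gstate \<Rightarrow> gstate \<Rightarrow> bool" where
  "byz n F g g' = (\<exists>j k m. j \<in> F \<and> k < n \<and> g' = g\<lparr>net := insert (j, k, m) (net g)\<rparr>)"

definition step :: "nat \<Rightarrow> nat \<Rightarrow> nat set \<Rightarrow> (nat \<Rightarrow> bool) \<Rightarrow> gstate \<Rightarrow> gstate \<Rightarrow> bool" where
  "step n t F coin g g' =
     ((\<exists>i. i < n \<and> i \<notin> F \<and> (step3 n t i g g' \<or> step6 n t coin i g g'))
      \<or> deliver n t F g g' \<or> byz n F g g' \<or> g' = g)"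

text \<open>A (fair, infinite) execution: coin r is the common coin bit of round r.\<close>
definition execution :: "nat \<Rightarrow> nat \<Rightarrow> nat set \<Rightarrow> (nat \<Rightarrow> bool) \<Rightarrow> (nat \<Rightarrow> bool)
                          \<Rightarrow> (nat \<Rightarrow> gstate) \<Rightarrow> bool" where
  "execution n t F props coin ex =
     (init_state n F props (ex 0) \<and>
      (\<forall>k. step n t F coin (ex k) (ex (Suc k))) \<and>
      (\<forall>j i m k. j < n \<and> j \<notin> F \<and> i < n \<and> i \<notin> F \<and> (j, i, m) \<in> net (ex k) \<longrightarrow>
          (\<exists>k'. (j, m) \<in> rcv (loc (ex k') i))) \<and>
      (\<forall>i k. i < n \<and> i \<notin> F \<and> (\<forall>k'\<ge>k. enabled n t i (ex k')) \<longrightarrow>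
          (\<exists>k'\<ge>k. step3 n t i (ex k') (ex (Suc k')) \<or> step6 n t coin i (ex k') (ex (Suc k')))))"

end

theory Submission
  imports Defs
begin

text \<open>
  Suppose p_i decides v in round r, on a view of n - t AUX(r, v) messages.  Any other view of
  n - t AUX messages of round r shares a correct sender with it, and a correct process sends a
  single AUX value per round, so every round-r view contains v.  As the coin of round r is v,
  every correct process leaves round r with support, and more generally no correct process ever
  broadcasts SVAL for a value-\<not>v instance EST[r' + 1] created after a round r' \<ge> r whose coin
  is v.  From round r + 1 on, ptr[\<not>v] only points to such instances; they collect at most t
  SVAL messages, so ptr[\<not>v] stays false, all later views are {v}, and no process can decide
  \<not>v, neither earlier nor later.  That ptr[v] becomes true in every round \<rho> \<ge> r follows from
  the view of the process when it leaves round \<rho>; that every round is left is the liveness part: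
  in each round some instance is relayed by t + 1 correct processes (a majority of the proposals
  in round 1, and afterwards either the instance of the coin value or the freshly created one),
  hence becomes true everywhere, so all AUX messages arrive with true flags and fairness forces
  the step.
\<close>

text \<open>During round r, ptr[x] refers to the S-Broadcast instance EST[ptr_round coin r x]:
  step (2) of round r \<ge> 2 re-points ptr[\<not>s] for the coin s of round r - 1 and leaves
  ptr[s] alone.\<close>
fun ptr_round :: "(nat \<Rightarrow> bool) \<Rightarrow> nat \<Rightarrow> bool \<Rightarrow> nat" where
  "ptr_round coin 0 x = 1"
| "ptr_round coin (Suc r) x =
     (if r = 0 then 1 else if x = (\<not> coin r) then Suc r else ptr_round coin r x)"

lemma ptr_round_Suc: "1 \<le> r \<Longrightarrow> ptr_round coin (Suc r) = (ptr_round coin r)(\<not> coin r := Suc r)"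
  by (auto simp: fun_eq_iff)

lemma ptr_round_fresh: "2 \<le> r \<Longrightarrow> ptr_round coin r (\<not> coin (r - 1)) = r"
  by (cases r) auto

abbreviation supported :: "bool set \<Rightarrow> bool \<Rightarrow> bool" where
  "supported V s \<equiv> V = {s} \<or> V = {False, True}"

lemma bcast_mem: "(a, k, m) \<in> bcast n i m' \<longleftrightarrow> a = i \<and> k < n \<and> m = m'"
  by (auto simp: bcast_def)

lemma cnt_mono: "rcv l \<subseteq> rcv l' \<Longrightarrow> cnt n l T x \<le> cnt n l' T x"
  unfolding cnt_def by (rule card_mono) auto

lemma sval_mono: "rcv l \<subseteq> rcv l' \<Longrightarrow> sval n t l T x \<Longrightarrow> sval n t l' T x"
  unfolding sval_def using cnt_mono le_trans by blast

lemma sval_cong: "rcv l = rcv l' \<Longrightarrow> sval n t l = sval n t l'"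
  by (simp add: sval_def cnt_def fun_eq_iff)

lemma cnt_update [simp]:
  "cnt n (l\<lparr>svsent := X\<rparr>) = cnt n l" "cnt n (l\<lparr>inv := X\<rparr>) = cnt n l"
  "cnt n (l\<lparr>pc := p\<rparr>) = cnt n l"
  by (simp_all add: fun_eq_iff cnt_def)

lemma sval_update [simp]:
  "sval n t (l\<lparr>svsent := X\<rparr>) = sval n t l" "sval n t (l\<lparr>inv := X\<rparr>) = sval n t l"
  "sval n t (l\<lparr>pc := p\<rparr>) = sval n t l"
  by (simp_all add: fun_eq_iff sval_def cnt_def)

lemma relay_set_closed:
  "(T, x) \<in> inv l \<Longrightarrow> t + 1 \<le> cnt n l T x \<Longrightarrow> (T, x) \<in> svsent l \<union> relay_set n t l"
  by (auto simp: relay_set_def)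

lemma relay_set_cnt: "(T, x) \<in> relay_set n t l \<Longrightarrow> t + 1 \<le> cnt n l T x"
  by (simp add: relay_set_def)

lemma relay_loc:
  "loc (relay n t i g) =
     (loc g)(i := (loc g i)\<lparr>svsent := svsent (loc g i) \<union> relay_set n t (loc g i)\<rparr>)"
  by (simp add: relay_def Let_def)

lemma relay_net:
  "net (relay n t i g) = net g \<union> (\<Union>(T, x)\<in>relay_set n t (loc g i). bcast n i (SVAL T x))"
  by (simp add: relay_def Let_def)

section \<open>An inductive invariant of a correct process\<close>

text \<open>N is the set of messages sent so far.  By round_progress, in every round r \<ge> 2 the
  process has either broadcast SVAL(EST[r], \<not>s) itself (it had no support) or already sees
  ptr[s] true (it had support), where s is the coin of round r - 1.\<close>
locale proc_inv =
  fixes n t :: nat and props coin :: "nat \<Rightarrow> bool" and i :: nat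
    and l :: lstate and N :: "(nat \<times> nat \<times> msg) set"
  assumes rnd_pos: "1 \<le> rnd l"
    and ptr_eq: "ptr l = ptr_round coin (rnd l)"
    and ptr_invoked: "\<And>r x. 1 \<le> r \<Longrightarrow> r \<le> rnd l \<Longrightarrow> (ptr_round coin r x, x) \<in> inv l"
    and relayed: "\<And>T x. (T, x) \<in> inv l \<Longrightarrow> t + 1 \<le> cnt n l T x \<Longrightarrow> (T, x) \<in> svsent l"
    and svsent_sent: "\<And>T x k. (T, x) \<in> svsent l \<Longrightarrow> k < n \<Longrightarrow> (i, k, SVAL T x) \<in> N"
    and sval_sent_svsent: "\<And>k T x. (i, k, SVAL T x) \<in> N \<Longrightarrow> (T, x) \<in> svsent l"
    and rcv_sent: "\<And>q m. (q, m) \<in> rcv l \<Longrightarrow> (q, i, m) \<in> N"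
    and aux_sent_past: "\<And>k r w. (i, k, AUX r w) \<in> N \<Longrightarrow> r < rnd l \<or> r = rnd l \<and> pc l = At6"
    and aux_sent_sval: "\<And>k r w. (i, k, AUX r w) \<in> N \<Longrightarrow> sval n t l (ptr_round coin r w) w"
    and aux_unique: "\<And>k k' r w w'. (i, k, AUX r w) \<in> N \<Longrightarrow> (i, k', AUX r w') \<in> N \<Longrightarrow> w = w'"
    and aux_bcast: "\<And>r. 1 \<le> r \<Longrightarrow> r < rnd l \<or> r = rnd l \<and> pc l = At6 \<Longrightarrow>
                          \<exists>w. bcast n i (AUX r w) \<subseteq> N"
    and supp_sval: "supp l \<Longrightarrow> sval n t l (ptr_round coin (rnd l) (est l)) (est l)"
    and proposal_svsent: "(1, props i) \<in> svsent l"
    and round_progress: "\<And>r. 2 \<le> r \<Longrightarrow> r \<le> rnd l \<Longrightarrow>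
        (r, \<not> coin (r - 1)) \<in> svsent l \<or> sval n t l (ptr_round coin r (coin (r - 1))) (coin (r - 1))"
begin

lemma flag_eq: "flag n t l x = sval n t l (ptr_round coin (rnd l) x) x"
  by (simp add: flag_def ptr_eq)

end

lemma proc_inv_other_sends:
  assumes "proc_inv n t props coin i l N" "\<And>k m. (i, k, m) \<notin> M"
  shows "proc_inv n t props coin i l (N \<union> M)"
proof -
  have same_out: "(i, k, m) \<in> N \<union> M \<longleftrightarrow> (i, k, m) \<in> N" for k m using assms(2) by blast
  have "bcast n i m \<subseteq> N \<union> M" if "bcast n i m \<subseteq> N" for m using that by blast
  then show ?thesis using assms(1) unfolding proc_inv_def same_out by (simp, metis)
qed

lemma proc_inv_init:
  assumes "init_state n F props g" "i < n" "i \<notin> F"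
  shows "proc_inv n t props coin i (loc g i) (net g)"
proof -
  have l: "loc g i = \<lparr>rnd = 1, est = \<not> props i, supp = False, ptr = (\<lambda>_. 1), pc = At3,
      dec = None, inv = {(1, \<not> props i), (1, props i)}, svsent = {(1, props i)}, rcv = {}\<rparr>"
    and N: "net g = (\<Union>j\<in>{j. j < n \<and> j \<notin> F}. bcast n j (SVAL 1 (props j)))"
    using assms unfolding init_state_def by auto
  have "cnt n (loc g i) T x = 0" for T x using l by (simp add: cnt_def)
  moreover have "(1, x) \<in> inv (loc g i)" for x using l by (cases x) auto
  ultimately show ?thesis using l N assms(2,3)
    by unfold_locales (auto simp: fun_eq_iff bcast_mem)
qed

lemma proc_inv_step3:
  assumes "proc_inv n t props coin i l N" "pc l = At3"
    and flag: "flag n t l False \<or> flag n t l True"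
    and w: "w = (if supp l then est l else if flag n t l False then False else True)"
  shows "proc_inv n t props coin i (l\<lparr>pc := At6\<rparr>) (N \<union> bcast n i (AUX (rnd l) w))"
proof -
  interpret proc_inv n t props coin i l N by fact
  define l' where "l' = l\<lparr>pc := At6\<rparr>"
  define N' where "N' = N \<union> bcast n i (AUX (rnd l) w)"
  have sent': "(i, k, m) \<in> N' \<longleftrightarrow> (i, k, m) \<in> N \<or> k < n \<and> m = AUX (rnd l) w" for k m
    by (auto simp: N'_def bcast_mem)
  have sval_w: "sval n t l (ptr_round coin (rnd l) w) w"
    using supp_sval flag w by (auto simp: flag_eq)
  have old_aux: "r < rnd l" if "(i, k, AUX r w') \<in> N" for k r w'
    using aux_sent_past[OF that] \<open>pc l = At3\<close> by auto
  have "proc_inv n t props coin i l' N'"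
  proof unfold_locales
    show "(T, x) \<in> svsent l'" if "(i, k, SVAL T x) \<in> N'" for k T x
      using that sval_sent_svsent by (auto simp: l'_def sent')
    show "r < rnd l' \<or> r = rnd l' \<and> pc l' = At6" if "(i, k, AUX r w') \<in> N'" for k r w'
      using that aux_sent_past by (auto simp: l'_def sent')
    show "sval n t l' (ptr_round coin r w') w'" if "(i, k, AUX r w') \<in> N'" for k r w'
      using that aux_sent_sval sval_w by (auto simp: l'_def sent')
    show "w1 = w2" if "(i, k, AUX r w1) \<in> N'" and "(i, k', AUX r w2) \<in> N'" for k k' r w1 w2
      using that aux_unique old_aux unfolding sent' by (metis less_irrefl msg.inject(2))
    show "\<exists>w'. bcast n i (AUX r w') \<subseteq> N'" if "1 \<le> r" "r < rnd l' \<or> r = rnd l' \<and> pc l' = At6" for r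
      using that aux_bcast by (cases "r < rnd l") (auto simp: l'_def N'_def, blast)
  qed (use rnd_pos ptr_eq ptr_invoked relayed svsent_sent rcv_sent supp_sval proposal_svsent
      round_progress in \<open>auto simp: l'_def N'_def\<close>)
  then show ?thesis by (simp add: l'_def N'_def)
qed

lemma proc_inv_deliver:
  assumes "proc_inv n t props coin i l N" "(j, i, m) \<in> N"
  defines "lr \<equiv> l\<lparr>rcv := insert (j, m) (rcv l)\<rparr>"
  shows "proc_inv n t props coin i (lr\<lparr>svsent := svsent lr \<union> relay_set n t lr\<rparr>)
           (N \<union> (\<Union>(T, x)\<in>relay_set n t lr. bcast n i (SVAL T x)))"
proof -
  interpret proc_inv n t props coin i l N by fact
  define l' where "l' = lr\<lparr>svsent := svsent lr \<union> relay_set n t lr\<rparr>"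
  define N' where "N' = N \<union> (\<Union>(T, x)\<in>relay_set n t lr. bcast n i (SVAL T x))"
  have sent': "(i, k, m') \<in> N' \<longleftrightarrow> (i, k, m') \<in> N \<or> k < n \<and> (\<exists>T x. (T, x) \<in> relay_set n t lr \<and> m' = SVAL T x)"
    for k m' unfolding N'_def by (fastforce simp: bcast_mem)
  have sval': "sval n t l T x \<Longrightarrow> sval n t l' T x" for T x
    by (rule sval_mono) (auto simp: l'_def lr_def)
  have grows: "N \<subseteq> N'" by (simp add: N'_def)
  have "proc_inv n t props coin i l' N'"
  proof unfold_locales
    show "(T, x) \<in> svsent l'" if "(T, x) \<in> inv l'" "t + 1 \<le> cnt n l' T x" for T x
      using that relay_set_closed[of T x lr] by (simp add: l'_def lr_def cnt_def)
    show "(T, x) \<in> svsent l'" if "(i, k, SVAL T x) \<in> N'" for k T x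
      using that sval_sent_svsent by (auto simp: l'_def lr_def sent')
    show "sval n t l' (ptr_round coin r w) w" if "(i, k, AUX r w) \<in> N'" for k r w
      using that aux_sent_sval sval' by (auto simp: sent')
    show "r < rnd l' \<or> r = rnd l' \<and> pc l' = At6" if "(i, k, AUX r w) \<in> N'" for k r w
      using that aux_sent_past by (auto simp: l'_def lr_def sent')
    show "w = w'" if "(i, k, AUX r w) \<in> N'" "(i, k', AUX r w') \<in> N'" for k k' r w w'
      using that aux_unique by (auto simp: sent')
    show "\<exists>w. bcast n i (AUX r w) \<subseteq> N'" if "1 \<le> r" "r < rnd l' \<or> r = rnd l' \<and> pc l' = At6" for r
      using that aux_bcast by (fastforce simp: l'_def lr_def N'_def)
    show "supp l' \<Longrightarrow> sval n t l' (ptr_round coin (rnd l') (est l')) (est l')"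
      using supp_sval sval' by (simp add: l'_def lr_def)
    show "(r, \<not> coin (r - 1)) \<in> svsent l' \<or> sval n t l' (ptr_round coin r (coin (r - 1))) (coin (r - 1))"
      if "2 \<le> r" "r \<le> rnd l'" for r
      using that round_progress[of r] sval' by (auto simp: l'_def lr_def)
  qed (use rnd_pos ptr_eq ptr_invoked svsent_sent rcv_sent proposal_svsent
      subsetD[OF grows] \<open>(j, i, m) \<in> N\<close> in \<open>auto simp: l'_def lr_def sent'\<close>)
  then show ?thesis by (simp add: l'_def N'_def)
qed

lemma proc_inv_step6:
  assumes "proc_inv n t props coin i l N" "pc l = At6" and view: "view_ok n t l S ws"
    and s_def: "s = coin (rnd l)"
    and sp_def: "sp = supported (ws ` S) s"
    and l1_def: "l1 = l\<lparr>rnd := Suc (rnd l), est := s, supp := sp, dec := d, pc := At3,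
                  ptr := (ptr l)(\<not> s := Suc (rnd l))\<rparr>"
    and l2_def: "l2 = l1\<lparr>inv := insert (Suc (rnd l), \<not> s) (inv l1),
                   svsent := (if \<not> sp then insert (Suc (rnd l), \<not> s) (svsent l1) else svsent l1)\<rparr>"
    and N2_def: "N2 = (if \<not> sp then N \<union> bcast n i (SVAL (Suc (rnd l)) (\<not> s)) else N)"
  shows "proc_inv n t props coin i (l2\<lparr>svsent := svsent l2 \<union> relay_set n t l2\<rparr>)
           (N2 \<union> (\<Union>(T, x)\<in>relay_set n t l2. bcast n i (SVAL T x)))"
proof -
  interpret proc_inv n t props coin i l N by fact
  define l' where "l' = l2\<lparr>svsent := svsent l2 \<union> relay_set n t l2\<rparr>"
  define N' where "N' = N2 \<union> (\<Union>(T, x)\<in>relay_set n t l2. bcast n i (SVAL T x))"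
  have fields: "rnd l' = Suc (rnd l)" "est l' = s" "supp l' = sp" "pc l' = At3" "rcv l' = rcv l"
    "inv l' = insert (Suc (rnd l), \<not> s) (inv l)"
    "svsent l' = svsent l \<union> (if sp then {} else {(Suc (rnd l), \<not> s)}) \<union> relay_set n t l2"
    by (auto simp: l'_def l2_def l1_def)
  have sent': "(i, k, m) \<in> N' \<longleftrightarrow> (i, k, m) \<in> N \<or> k < n \<and>
      (m = SVAL (Suc (rnd l)) (\<not> s) \<and> \<not> sp \<or> (\<exists>T x. (T, x) \<in> relay_set n t l2 \<and> m = SVAL T x))"
    for k m unfolding N'_def N2_def by (cases sp) (fastforce simp: bcast_mem)+
  have grows: "N \<subseteq> N'" by (auto simp: N'_def N2_def)
  have sval': "sval n t l' = sval n t l" using fields(5) by (rule sval_cong)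
  have ptr': "ptr_round coin (Suc (rnd l)) = (ptr_round coin (rnd l))(\<not> s := Suc (rnd l))"
    using ptr_round_Suc[OF rnd_pos] by (simp add: s_def)
  have sval_s: "sval n t l (ptr_round coin (rnd l) s) s" if sp
  proof -
    have "s \<in> ws ` S" using that by (auto simp: sp_def)
    then show ?thesis using view by (auto simp: view_ok_def flag_eq)
  qed
  have "proc_inv n t props coin i l' N'"
  proof unfold_locales
    show "ptr l' = ptr_round coin (rnd l')"
      using ptr_eq ptr' by (simp add: l'_def l2_def l1_def)
    show "(ptr_round coin r x, x) \<in> inv l'" if "1 \<le> r" "r \<le> rnd l'" for r x
      using that ptr_invoked[of r x] ptr_invoked[of "rnd l" x] rnd_pos ptr'
      by (cases "r = Suc (rnd l)") (auto simp: fields)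
    show "(T, x) \<in> svsent l'" if "(T, x) \<in> inv l'" "t + 1 \<le> cnt n l' T x" for T x
      using that relay_set_closed[of T x l2] by (simp add: l'_def)
    show "(i, k, SVAL T x) \<in> N'" if "(T, x) \<in> svsent l'" "k < n" for T x k
      using that svsent_sent grows by (auto simp: fields sent' split: if_splits)
    show "(T, x) \<in> svsent l'" if "(i, k, SVAL T x) \<in> N'" for k T x
      using that sval_sent_svsent by (auto simp: fields sent')
    show "r < rnd l' \<or> r = rnd l' \<and> pc l' = At6" if "(i, k, AUX r w) \<in> N'" for k r w
      using that aux_sent_past by (fastforce simp: fields sent')
    show "w = w'" if "(i, k, AUX r w) \<in> N'" "(i, k', AUX r w') \<in> N'" for k k' r w w'
      using that aux_unique by (auto simp: sent')
    show "\<exists>w. bcast n i (AUX r w) \<subseteq> N'" if "1 \<le> r" "r < rnd l' \<or> r = rnd l' \<and> pc l' = At6" for r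
      using that aux_bcast[of r] grows \<open>pc l = At6\<close> by (fastforce simp: fields)
    show "supp l' \<Longrightarrow> sval n t l' (ptr_round coin (rnd l') (est l')) (est l')"
      using sval_s ptr' by (simp add: fields sval')
    show "(r, \<not> coin (r - 1)) \<in> svsent l' \<or> sval n t l' (ptr_round coin r (coin (r - 1))) (coin (r - 1))"
      if "2 \<le> r" "r \<le> rnd l'" for r
      using that round_progress[of r] sval_s ptr' by (cases "r = Suc (rnd l)") (auto simp: fields sval' s_def)
  qed (use rnd_pos rcv_sent aux_sent_sval proposal_svsent subsetD[OF grows] in \<open>auto simp: fields sval' sent'\<close>)
  then show ?thesis by (simp add: l'_def N'_def)
qed

lemma step3E:
  assumes "step3 n t a g g'"
  obtains w where "pc (loc g a) = At3" "flag n t (loc g a) False \<or> flag n t (loc g a) True"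
    "w = (if supp (loc g a) then est (loc g a) else if flag n t (loc g a) False then False else True)"
    "loc g' = (loc g)(a := (loc g a)\<lparr>pc := At6\<rparr>)"
    "net g' = net g \<union> bcast n a (AUX (rnd (loc g a)) w)"
  using assms unfolding step3_def Let_def by auto

lemma deliverE:
  assumes "deliver n t F g g'"
  obtains j a m where "a < n" "a \<notin> F" "(j, a, m) \<in> net g"
    "loc g' = (loc g)(a := ((loc g a)\<lparr>rcv := insert (j, m) (rcv (loc g a))\<rparr>)
       \<lparr>svsent := svsent (loc g a) \<union> relay_set n t ((loc g a)\<lparr>rcv := insert (j, m) (rcv (loc g a))\<rparr>)\<rparr>)"
    "net g' = net g \<union> (\<Union>(T, x)\<in>relay_set n t ((loc g a)\<lparr>rcv := insert (j, m) (rcv (loc g a))\<rparr>).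
                         bcast n a (SVAL T x))"
  using assms unfolding deliver_def by (auto simp: relay_loc relay_net)

lemma step6E:
  assumes "step6 n t coin a g g'"
  obtains S ws s sp l1 l2 where "pc (loc g a) = At6" "view_ok n t (loc g a) S ws"
    "s = coin (rnd (loc g a))" "sp = supported (ws ` S) s"
    "l1 = (loc g a)\<lparr>rnd := Suc (rnd (loc g a)), est := s, supp := sp,
       dec := (if ws ` S = {s} \<and> dec (loc g a) = None then Some (s, rnd (loc g a)) else dec (loc g a)),
       pc := At3, ptr := (ptr (loc g a))(\<not> s := Suc (rnd (loc g a)))\<rparr>"
    "l2 = l1\<lparr>inv := insert (Suc (rnd (loc g a)), \<not> s) (inv l1),
       svsent := (if \<not> sp then insert (Suc (rnd (loc g a)), \<not> s) (svsent l1) else svsent l1)\<rparr>"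
    "rcv l2 = rcv (loc g a)"
    "loc g' = (loc g)(a := l2\<lparr>svsent := svsent l2 \<union> relay_set n t l2\<rparr>)"
    "net g' = (if \<not> sp then net g \<union> bcast n a (SVAL (Suc (rnd (loc g a))) (\<not> s)) else net g) \<union>
       (\<Union>(T, x)\<in>relay_set n t l2. bcast n a (SVAL T x))"
  using assms unfolding step6_def by (auto simp: Let_def sbcast_def relay_loc relay_net)

lemma step_cases [consumes 1, case_names step3 step6 deliver byz idle]:
  assumes "step n t F coin g g'"
  obtains (step3) a where "step3 n t a g g'"
    | (step6) a where "step6 n t coin a g g'"
    | (deliver) "deliver n t F g g'"
    | (byz) j k m where "j \<in> F" "g' = g\<lparr>net := insert (j, k, m) (net g)\<rparr>"
    | (idle) "g' = g"
  using assms unfolding step_def byz_def by blast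

definition proc_invs :: "nat \<Rightarrow> nat \<Rightarrow> nat set \<Rightarrow> (nat \<Rightarrow> bool) \<Rightarrow> (nat \<Rightarrow> bool) \<Rightarrow> gstate \<Rightarrow> bool" where
  "proc_invs n t F props coin g \<longleftrightarrow>
     (\<forall>i. i < n \<and> i \<notin> F \<longrightarrow> proc_inv n t props coin i (loc g i) (net g))"

lemma proc_invs_init: "init_state n F props g \<Longrightarrow> proc_invs n t F props coin g"
  unfolding proc_invs_def using proc_inv_init by blast

lemma proc_inv_after_step3:
  assumes inv: "proc_inv n t props coin i (loc g i) (net g)" and "step3 n t a g g'"
  shows "proc_inv n t props coin i (loc g' i) (net g')"
proof -
  obtain w where "pc (loc g a) = At3" "flag n t (loc g a) False \<or> flag n t (loc g a) True"
    "w = (if supp (loc g a) then est (loc g a) else if flag n t (loc g a) False then False else True)"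
    and g': "loc g' = (loc g)(a := (loc g a)\<lparr>pc := At6\<rparr>)"
      "net g' = net g \<union> bcast n a (AUX (rnd (loc g a)) w)"
    using \<open>step3 n t a g g'\<close> by (rule step3E)
  then show ?thesis
    using proc_inv_step3 proc_inv_other_sends[OF inv] inv by (cases "i = a") (auto simp: bcast_mem)
qed

lemma proc_inv_after_step6:
  assumes inv: "proc_inv n t props coin i (loc g i) (net g)" and "step6 n t coin a g g'"
  shows "proc_inv n t props coin i (loc g' i) (net g')"
  using \<open>step6 n t coin a g g'\<close>
proof (rule step6E)
  fix S ws s sp l1 l2
  assume fire: "pc (loc g a) = At6" "view_ok n t (loc g a) S ws"
    "s = coin (rnd (loc g a))" "sp = supported (ws ` S) s"
    and "l1 = (loc g a)\<lparr>rnd := Suc (rnd (loc g a)), est := s, supp := sp,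
       dec := (if ws ` S = {s} \<and> dec (loc g a) = None then Some (s, rnd (loc g a)) else dec (loc g a)),
       pc := At3, ptr := (ptr (loc g a))(\<not> s := Suc (rnd (loc g a)))\<rparr>"
    and "l2 = l1\<lparr>inv := insert (Suc (rnd (loc g a)), \<not> s) (inv l1),
       svsent := (if \<not> sp then insert (Suc (rnd (loc g a)), \<not> s) (svsent l1) else svsent l1)\<rparr>"
    and g': "loc g' = (loc g)(a := l2\<lparr>svsent := svsent l2 \<union> relay_set n t l2\<rparr>)"
      "net g' = (if \<not> sp then net g \<union> bcast n a (SVAL (Suc (rnd (loc g a))) (\<not> s)) else net g) \<union>
       (\<Union>(T, x)\<in>relay_set n t l2. bcast n a (SVAL T x))"
  show ?thesis
  proof (cases "i = a")
    case True
    then show ?thesis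
      using proc_inv_step6[OF inv[unfolded True] fire \<open>l1 = _\<close> \<open>l2 = _\<close> refl] g' by simp
  next
    case False
    then show ?thesis
      using g' by (auto simp: bcast_mem Un_assoc intro!: proc_inv_other_sends[OF inv])
  qed
qed

lemma proc_inv_after_deliver:
  assumes inv: "proc_inv n t props coin i (loc g i) (net g)" and "deliver n t F g g'"
  shows "proc_inv n t props coin i (loc g' i) (net g')"
proof -
  obtain j a m where "(j, a, m) \<in> net g" and g':
    "loc g' = (loc g)(a := ((loc g a)\<lparr>rcv := insert (j, m) (rcv (loc g a))\<rparr>)
       \<lparr>svsent := svsent (loc g a) \<union> relay_set n t ((loc g a)\<lparr>rcv := insert (j, m) (rcv (loc g a))\<rparr>)\<rparr>)"
    "net g' = net g \<union> (\<Union>(T, x)\<in>relay_set n t ((loc g a)\<lparr>rcv := insert (j, m) (rcv (loc g a))\<rparr>).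
                         bcast n a (SVAL T x))"
    using \<open>deliver n t F g g'\<close> by (rule deliverE)
  then show ?thesis
    using proc_inv_deliver[OF inv]
    by (cases "i = a") (auto simp: bcast_mem intro!: proc_inv_other_sends[OF inv])
qed

lemma proc_invs_step:
  assumes invs: "proc_invs n t F props coin g" and step: "step n t F coin g g'"
  shows "proc_invs n t F props coin g'"
  unfolding proc_invs_def
proof (intro allI impI)
  fix i assume "i < n \<and> i \<notin> F"
  then have inv: "proc_inv n t props coin i (loc g i) (net g)"
    using invs by (simp add: proc_invs_def)
  from step show "proc_inv n t props coin i (loc g' i) (net g')"
  proof (cases rule: step_cases)
    case (byz j k m)
    then show ?thesis using proc_inv_other_sends[OF inv, of "{(j, k, m)}"] \<open>i < n \<and> i \<notin> F\<close> by auto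
  qed (use inv in \<open>auto intro: proc_inv_after_step3[OF inv] proc_inv_after_step6[OF inv]
      proc_inv_after_deliver[OF inv]\<close>)
qed

lemma proc_invs_execution:
  "execution n t F props coin ex \<Longrightarrow> proc_invs n t F props coin (ex k)"
  by (induction k) (auto simp: execution_def intro: proc_invs_init proc_invs_step)

lemma step6_rnd: "step6 n t coin a g g' \<Longrightarrow> rnd (loc g' a) = Suc (rnd (loc g a))"
  by (elim step6E) simp

lemma step6_dec:
  assumes "step6 n t coin a g g'"
  obtains S ws where "view_ok n t (loc g a) S ws"
    "dec (loc g' a) = (if ws ` S = {coin (rnd (loc g a))} \<and> dec (loc g a) = None
                       then Some (coin (rnd (loc g a)), rnd (loc g a)) else dec (loc g a))"
  using assms by (elim step6E) auto

lemma step_grows: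
  assumes "step n t F coin g g'"
  shows "net g \<subseteq> net g'" "rcv (loc g j) \<subseteq> rcv (loc g' j)" "inv (loc g j) \<subseteq> inv (loc g' j)"
  using assms unfolding step_def byz_def
  by (auto elim!: step3E step6E deliverE)

lemma step_keeps_round:
  assumes "step n t F coin g g'" "\<not> step6 n t coin j g g'"
  shows "rnd (loc g' j) = rnd (loc g j) \<and> dec (loc g' j) = dec (loc g j) \<and>
    (pc (loc g j) = At6 \<longrightarrow> pc (loc g' j) = At6)"
  using assms(1)
proof (cases rule: step_cases)
  case (step6 a)
  then have "a \<noteq> j" using assms(2) by blast
  with step6 show ?thesis by (auto elim!: step6E)
qed (auto elim!: step3E deliverE)

lemma step_rcv_new:
  "step n t F coin g g' \<Longrightarrow> (p, m) \<in> rcv (loc g' j) \<Longrightarrow> (p, m) \<in> rcv (loc g j) \<or> (p, j, m) \<in> net g"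
  by (cases rule: step_cases) (auto elim!: step3E step6E deliverE split: if_splits)

lemma step_new_sval:
  assumes "step n t F coin g g'" "(q, k, SVAL T x) \<in> net g'" "(q, k, SVAL T x) \<notin> net g" "q \<notin> F"
  shows "t + 1 \<le> cnt n (loc g' q) T x \<or>
    step6 n t coin q g g' \<and> T = Suc (rnd (loc g q)) \<and> x = (\<not> coin (rnd (loc g q))) \<and>
    (\<exists>S ws. view_ok n t (loc g q) S ws \<and> \<not> supported (ws ` S) (coin (rnd (loc g q))))"
  using assms(1)
proof (cases rule: step_cases)
  case (step3 a)
  then show ?thesis using assms(2,3) by (auto elim!: step3E simp: bcast_mem)
next
  case (step6 a)
  obtain S ws s sp l1 l2 where fire: "pc (loc g a) = At6" "view_ok n t (loc g a) S ws"
    "s = coin (rnd (loc g a))" "sp = supported (ws ` S) s"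
    and "l1 = (loc g a)\<lparr>rnd := Suc (rnd (loc g a)), est := s, supp := sp,
       dec := (if ws ` S = {s} \<and> dec (loc g a) = None then Some (s, rnd (loc g a)) else dec (loc g a)),
       pc := At3, ptr := (ptr (loc g a))(\<not> s := Suc (rnd (loc g a)))\<rparr>"
    and "l2 = l1\<lparr>inv := insert (Suc (rnd (loc g a)), \<not> s) (inv l1),
       svsent := (if \<not> sp then insert (Suc (rnd (loc g a)), \<not> s) (svsent l1) else svsent l1)\<rparr>"
    and l2: "rcv l2 = rcv (loc g a)"
    and g': "loc g' = (loc g)(a := l2\<lparr>svsent := svsent l2 \<union> relay_set n t l2\<rparr>)"
      "net g' = (if \<not> sp then net g \<union> bcast n a (SVAL (Suc (rnd (loc g a))) (\<not> s)) else net g) \<union>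
       (\<Union>(T, x)\<in>relay_set n t l2. bcast n a (SVAL T x))"
    using step6 by (rule step6E)
  have "(T, x) \<in> relay_set n t l2 \<and> q = a \<or> \<not> sp \<and> q = a \<and> T = Suc (rnd (loc g a)) \<and> x = (\<not> s)"
    using assms(2,3) g'(2) by (auto simp: bcast_mem split: if_splits)
  then show ?thesis
  proof
    assume "(T, x) \<in> relay_set n t l2 \<and> q = a"
    then show ?thesis using relay_set_cnt g'(1) by auto
  next
    assume "\<not> sp \<and> q = a \<and> T = Suc (rnd (loc g a)) \<and> x = (\<not> s)"
    then show ?thesis using step6 fire by auto
  qed
next
  case deliver
  then show ?thesis using assms(2,3)
    by (auto elim!: deliverE simp: bcast_mem dest!: relay_set_cnt)
qed (use assms in auto)

section \<open>Fair executions: every round is eventually left\<close>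

lemma enabled_At3: "pc (loc g i) = At3 \<Longrightarrow> flag n t (loc g i) x \<Longrightarrow> enabled n t i g"
  by (cases x) (simp_all add: enabled_def)

lemma eventually_constant_Suc:
  assumes "\<forall>\<^sub>F k in sequentially. f k = c"
  shows "\<forall>\<^sub>F k in sequentially. f (Suc k) = f k"
proof -
  have "\<forall>\<^sub>F k in sequentially. f (Suc k) = c"
    using assms eventually_sequentially_Suc[of "\<lambda>k. f k = c"] by simp
  with assms show ?thesis by eventually_elim simp
qed

locale a2_execution =
  fixes n t :: nat and F :: "nat set" and props coin :: "nat \<Rightarrow> bool" and ex :: "nat \<Rightarrow> gstate"
  assumes resilience: "3 * t < n" and faulty_procs: "F \<subseteq> {..<n}" and faulty_card: "card F \<le> t"
    and execution: "execution n t F props coin ex"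
begin

definition correct :: "nat set" where
  "correct = {j. j < n \<and> j \<notin> F}"

lemma finite_correct: "finite correct"
  by (simp add: correct_def)

lemma finite_faulty: "finite F"
  using faulty_procs finite_subset by blast

lemma card_correct: "n - t \<le> card correct"
proof -
  have "correct = {..<n} - F" by (auto simp: correct_def)
  then show ?thesis using faulty_procs faulty_card finite_faulty by (simp add: card_Diff_subset)
qed

lemma correct_lt: "j \<in> correct \<Longrightarrow> j < n"
  by (simp add: correct_def)

lemma step_ex: "step n t F coin (ex k) (ex (Suc k))"
  using execution by (simp add: execution_def)

lemma proc_inv_ex: "j \<in> correct \<Longrightarrow> proc_inv n t props coin j (loc (ex k) j) (net (ex k))"
  using proc_invs_execution[OF execution] by (simp add: proc_invs_def correct_def)

lemma flag_ex: "j \<in> correct \<Longrightarrow>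
    flag n t (loc (ex k) j) x = sval n t (loc (ex k) j) (ptr_round coin (rnd (loc (ex k) j)) x) x"
  by (rule proc_inv.flag_eq[OF proc_inv_ex])

lemma net_mono: "k \<le> k' \<Longrightarrow> net (ex k) \<subseteq> net (ex k')"
  using step_grows(1)[OF step_ex] by (rule lift_Suc_mono_le)

lemma rcv_mono: "k \<le> k' \<Longrightarrow> rcv (loc (ex k) j) \<subseteq> rcv (loc (ex k') j)"
  using step_grows(2)[OF step_ex] by (rule lift_Suc_mono_le)

lemma inv_mono: "k \<le> k' \<Longrightarrow> inv (loc (ex k) j) \<subseteq> inv (loc (ex k') j)"
  using step_grows(3)[OF step_ex] by (rule lift_Suc_mono_le)

lemma rnd_mono:
  assumes "k \<le> k'" shows "rnd (loc (ex k) j) \<le> rnd (loc (ex k') j)"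
proof -
  have "rnd (loc (ex k) j) \<le> rnd (loc (ex (Suc k)) j)" for k
    using step_keeps_round[OF step_ex, of j k] step6_rnd[of n t coin j "ex k" "ex (Suc k)"]
    by (cases "step6 n t coin j (ex k) (ex (Suc k))") auto
  then show ?thesis using assms by (rule lift_Suc_mono_le)
qed

lemma eventually_received:
  assumes "j \<in> correct" "i \<in> correct" "(j, i, m) \<in> net (ex k)"
  shows "\<forall>\<^sub>F k in sequentially. (j, m) \<in> rcv (loc (ex k) i)"
proof -
  obtain k' where "(j, m) \<in> rcv (loc (ex k') i)"
    using execution assms unfolding execution_def correct_def by blast
  then show ?thesis
    unfolding eventually_sequentially using rcv_mono by blast
qed

lemma eventually_enabled_steps:
  assumes "i \<in> correct" "\<forall>\<^sub>F k in sequentially. enabled n t i (ex k)"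
  shows "\<exists>\<^sub>F k in sequentially. step3 n t i (ex k) (ex (Suc k)) \<or> step6 n t coin i (ex k) (ex (Suc k))"
proof -
  obtain K where K: "\<forall>k\<ge>K. enabled n t i (ex k)"
    using assms(2) by (auto simp: eventually_sequentially)
  show ?thesis unfolding frequently_sequentially
  proof
    fix N
    have "\<forall>k\<ge>max N K. enabled n t i (ex k)" using K by simp
    then obtain k where "k \<ge> max N K"
      "step3 n t i (ex k) (ex (Suc k)) \<or> step6 n t coin i (ex k) (ex (Suc k))"
      using execution assms(1) unfolding execution_def correct_def by blast
    then show "\<exists>k\<ge>N. step3 n t i (ex k) (ex (Suc k)) \<or> step6 n t coin i (ex k) (ex (Suc k))"
      by auto
  qed
qed

lemma sval_correct_senders:
  assumes "j \<in> correct" "sval n t (loc (ex k) j) T x"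
  obtains Q where "Q \<subseteq> correct" "t + 1 \<le> card Q" "\<forall>q\<in>Q. (T, x) \<in> svsent (loc (ex k) q)"
proof
  define A where "A = {q. q < n \<and> (q, SVAL T x) \<in> rcv (loc (ex k) j)}"
  have "2 * t + 1 \<le> card A" using assms(2) by (simp add: A_def sval_def cnt_def)
  moreover have "card A - card F \<le> card (A - F)"
    using finite_faulty by (rule diff_card_le_card_Diff)
  ultimately show "t + 1 \<le> card (A - F)" using faulty_card by linarith
  show "A - F \<subseteq> correct" by (auto simp: A_def correct_def)
  show "\<forall>q\<in>A - F. (T, x) \<in> svsent (loc (ex k) q)"
  proof
    fix q assume q: "q \<in> A - F"
    then have "(q, j, SVAL T x) \<in> net (ex k)"
      using proc_inv.rcv_sent[OF proc_inv_ex[OF assms(1)]] by (auto simp: A_def)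
    moreover have "q \<in> correct" using q by (auto simp: A_def correct_def)
    ultimately show "(T, x) \<in> svsent (loc (ex k) q)"
      using proc_inv.sval_sent_svsent[OF proc_inv_ex] by blast
  qed
qed

lemma eventually_cnt_ge_senders:
  assumes "Q \<subseteq> correct" "\<forall>q\<in>Q. (T, x) \<in> svsent (loc (ex k) q)"
  shows "\<forall>\<^sub>F k in sequentially. \<forall>j\<in>correct. card Q \<le> cnt n (loc (ex k) j) T x"
proof -
  have "\<forall>\<^sub>F k in sequentially. (q, SVAL T x) \<in> rcv (loc (ex k) j)" if "j \<in> correct" "q \<in> Q" for j q
  proof (rule eventually_received)
    show "(q, j, SVAL T x) \<in> net (ex k)"
      using that assms proc_inv.svsent_sent[OF proc_inv_ex] correct_lt by blast
  qed (use that assms in auto)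
  then have "\<forall>\<^sub>F k in sequentially. \<forall>j\<in>correct. \<forall>q\<in>Q. (q, SVAL T x) \<in> rcv (loc (ex k) j)"
    using finite_correct finite_subset[OF assms(1) finite_correct]
    by (intro eventually_ball_finite ballI) auto
  then show ?thesis
  proof (rule eventually_mono, intro ballI)
    fix k j assume "\<forall>j\<in>correct. \<forall>q\<in>Q. (q, SVAL T x) \<in> rcv (loc (ex k) j)" "j \<in> correct"
    then have "Q \<subseteq> {q. q < n \<and> (q, SVAL T x) \<in> rcv (loc (ex k) j)}"
      using assms(1) correct_lt by blast
    then show "card Q \<le> cnt n (loc (ex k) j) T x"
      unfolding cnt_def by (rule card_mono[rotated]) simp
  qed
qed

lemma sval_spreads_from_senders:
  assumes invoked: "\<forall>j\<in>correct. (T, x) \<in> inv (loc (ex K) j)"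
    and "Q \<subseteq> correct" "t + 1 \<le> card Q" "\<forall>q\<in>Q. (T, x) \<in> svsent (loc (ex k) q)"
  shows "\<forall>\<^sub>F k in sequentially. \<forall>j\<in>correct. sval n t (loc (ex k) j) T x"
proof -
  have "\<forall>\<^sub>F k in sequentially. \<forall>j\<in>correct. (T, x) \<in> svsent (loc (ex k) j)"
    using eventually_cnt_ge_senders[OF assms(2,4)] eventually_ge_at_top[of K]
  proof (rule eventually_elim2, intro ballI)
    fix k j assume "\<forall>j\<in>correct. card Q \<le> cnt n (loc (ex k) j) T x" "K \<le> k" "j \<in> correct"
    then show "(T, x) \<in> svsent (loc (ex k) j)"
      using proc_inv.relayed[OF proc_inv_ex] invoked inv_mono \<open>t + 1 \<le> card Q\<close> by fastforce
  qed
  then obtain k' where "\<forall>j\<in>correct. (T, x) \<in> svsent (loc (ex k') j)"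
    by (auto simp: eventually_sequentially)
  from eventually_cnt_ge_senders[OF order_refl this] show ?thesis
    by eventually_elim (use card_correct resilience in \<open>auto simp: sval_def\<close>)
qed

lemma sval_spreads:
  assumes "\<forall>j\<in>correct. (T, x) \<in> inv (loc (ex K) j)" "q \<in> correct" "sval n t (loc (ex k) q) T x"
  shows "\<forall>\<^sub>F k in sequentially. \<forall>j\<in>correct. sval n t (loc (ex k) j) T x"
  using assms(2,3) by (rule sval_correct_senders) (rule sval_spreads_from_senders[OF assms(1)])

lemma enabled_process_moves:
  assumes "j \<in> correct" "\<forall>\<^sub>F k in sequentially. enabled n t j (ex k)"
  shows "\<exists>\<^sub>F k in sequentially.
    rnd (loc (ex (Suc k)) j) \<noteq> rnd (loc (ex k) j) \<or> pc (loc (ex (Suc k)) j) \<noteq> pc (loc (ex k) j)"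
  using eventually_enabled_steps[OF assms]
proof (rule frequently_mono[rotated], intro allI impI)
  fix k assume "step3 n t j (ex k) (ex (Suc k)) \<or> step6 n t coin j (ex k) (ex (Suc k))"
  then show "rnd (loc (ex (Suc k)) j) \<noteq> rnd (loc (ex k) j) \<or> pc (loc (ex (Suc k)) j) \<noteq> pc (loc (ex k) j)"
  proof
    assume "step3 n t j (ex k) (ex (Suc k))"
    then show ?thesis by (elim step3E) simp
  qed (simp add: step6_rnd)
qed

lemma stuck_not_enabled:
  assumes "j \<in> correct" "\<forall>\<^sub>F k in sequentially. enabled n t j (ex k)"
    and "\<forall>\<^sub>F k in sequentially. rnd (loc (ex k) j) = r" "\<forall>\<^sub>F k in sequentially. pc (loc (ex k) j) = p"
  shows False
proof -
  have "\<forall>\<^sub>F k in sequentially.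
      rnd (loc (ex (Suc k)) j) = rnd (loc (ex k) j) \<and> pc (loc (ex (Suc k)) j) = pc (loc (ex k) j)"
    using assms(3,4) by (intro eventually_conj eventually_constant_Suc)
  then have "\<not> (\<exists>\<^sub>F k in sequentially.
      rnd (loc (ex (Suc k)) j) \<noteq> rnd (loc (ex k) j) \<or> pc (loc (ex (Suc k)) j) \<noteq> pc (loc (ex k) j))"
    unfolding not_frequently by (rule eventually_mono) simp
  with enabled_process_moves[OF assms(1,2)] show False by contradiction
qed

lemma At6_stable:
  assumes "k \<le> k'" "rnd (loc (ex k') j) = rnd (loc (ex k) j)" "pc (loc (ex k) j) = At6"
  shows "pc (loc (ex k') j) = At6"
  using assms
proof (induction k' rule: dec_induct)
  case (step m)
  then have same: "rnd (loc (ex m) j) = rnd (loc (ex k) j)"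
    using rnd_mono[of k m j] rnd_mono[of m "Suc m" j] by simp
  then have "\<not> step6 n t coin j (ex m) (ex (Suc m))"
    using step.prems step6_rnd by fastforce
  then show ?case using step_keeps_round[OF step_ex] step same by simp
qed simp

lemma leaves_round:
  assumes "rnd (loc (ex k1) j) = r" "r < rnd (loc (ex k) j)"
  shows "\<exists>k2\<ge>k1. rnd (loc (ex k2) j) = r \<and> step6 n t coin j (ex k2) (ex (Suc k2))"
  using assms(2)
proof (induction k)
  case 0
  then show ?case using assms(1) rnd_mono[of 0 k1 j] by simp
next
  case (Suc k)
  show ?case
  proof (cases "r < rnd (loc (ex k) j)")
    case False
    have "k1 \<le> k"
      using Suc.prems assms(1) rnd_mono[of "Suc k" k1 j] by (metis not_less not_less_eq_eq)
    then have "rnd (loc (ex k) j) = r" using False assms(1) rnd_mono[of k1 k j] by simp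
    moreover have "step6 n t coin j (ex k) (ex (Suc k))"
      using step_keeps_round[OF step_ex] Suc.prems calculation by fastforce
    ultimately show ?thesis using \<open>k1 \<le> k\<close> by blast
  qed (rule Suc.IH)
qed

lemma eventually_At6:
  assumes j: "j \<in> correct" and stuck: "\<forall>\<^sub>F k in sequentially. rnd (loc (ex k) j) = r"
    and flag: "\<forall>\<^sub>F k in sequentially. flag n t (loc (ex k) j) x"
  shows "\<forall>\<^sub>F k in sequentially. pc (loc (ex k) j) = At6"
proof -
  obtain K where K: "\<forall>k\<ge>K. rnd (loc (ex k) j) = r" using stuck by (auto simp: eventually_sequentially)
  have "\<exists>\<^sub>F k in sequentially. pc (loc (ex k) j) = At6"
  proof (rule ccontr)
    assume "\<not> (\<exists>\<^sub>F k in sequentially. pc (loc (ex k) j) = At6)"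
    then have "\<forall>\<^sub>F k in sequentially. pc (loc (ex k) j) \<noteq> At6"
      by (simp add: not_frequently)
    then have At3: "\<forall>\<^sub>F k in sequentially. pc (loc (ex k) j) = At3"
      by (rule eventually_mono) (metis pcl.exhaust)
    have "\<forall>\<^sub>F k in sequentially. enabled n t j (ex k)"
      using At3 flag by (rule eventually_elim2) (rule enabled_At3)
    from stuck_not_enabled[OF j this stuck At3] show False .
  qed
  then obtain k0 where "k0 \<ge> K" "pc (loc (ex k0) j) = At6"
    unfolding frequently_sequentially by blast
  then have "pc (loc (ex k) j) = At6" if "k \<ge> k0" for k
    using that K \<open>k0 \<ge> K\<close> \<open>pc (loc (ex k0) j) = At6\<close> by (auto intro: At6_stable)
  then show ?thesis unfolding eventually_sequentially by blast
qed

lemma majority_proposal: "\<exists>x. t + 1 \<le> card {j \<in> correct. props j = x}"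
proof -
  have "card correct = card {j \<in> correct. props j = True} + card {j \<in> correct. props j = False}"
    using finite_correct by (subst card_Un_disjoint[symmetric]) (auto intro: arg_cong[where f = card])
  moreover have "2 * t + 1 \<le> card correct" using card_correct resilience by linarith
  ultimately have "t + 1 \<le> card {j \<in> correct. props j = True} \<or> t + 1 \<le> card {j \<in> correct. props j = False}"
    by linarith
  then show ?thesis by blast
qed

lemma some_instance_succeeds:
  assumes "1 \<le> r" and reached: "\<forall>j\<in>correct. r \<le> rnd (loc (ex K) j)"
  shows "\<exists>x. \<forall>\<^sub>F k in sequentially. \<forall>j\<in>correct. sval n t (loc (ex k) j) (ptr_round coin r x) x"
proof -
  have invoked: "\<forall>j\<in>correct. (ptr_round coin r x, x) \<in> inv (loc (ex K) j)" for x
    using reached \<open>1 \<le> r\<close> proc_inv.ptr_invoked[OF proc_inv_ex] by blast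
  show ?thesis
  proof (cases "r = 1")
    case True
    obtain x where "t + 1 \<le> card {j \<in> correct. props j = x}" using majority_proposal by blast
    moreover have "\<forall>q\<in>{j \<in> correct. props j = x}. (ptr_round coin r x, x) \<in> svsent (loc (ex K) q)"
      using True proc_inv.proposal_svsent[OF proc_inv_ex] by auto
    ultimately have "\<forall>\<^sub>F k in sequentially. \<forall>j\<in>correct. sval n t (loc (ex k) j) (ptr_round coin r x) x"
      by (intro sval_spreads_from_senders[OF invoked]) auto
    then show ?thesis ..
  next
    case False
    then have "2 \<le> r" using \<open>1 \<le> r\<close> by simp
    define s where "s = coin (r - 1)"
    show ?thesis
    proof (cases "\<exists>q\<in>correct. sval n t (loc (ex K) q) (ptr_round coin r s) s")
      case True
      then obtain q where "q \<in> correct" "sval n t (loc (ex K) q) (ptr_round coin r s) s" ..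
      then have "\<forall>\<^sub>F k in sequentially. \<forall>j\<in>correct. sval n t (loc (ex k) j) (ptr_round coin r s) s"
        by (rule sval_spreads[OF invoked])
      then show ?thesis ..
    next
      case False
      then have "\<forall>q\<in>correct. (ptr_round coin r (\<not> s), \<not> s) \<in> svsent (loc (ex K) q)"
        using proc_inv.round_progress[OF proc_inv_ex \<open>2 \<le> r\<close>] reached ptr_round_fresh[OF \<open>2 \<le> r\<close>]
        by (fastforce simp: s_def)
      moreover have "t + 1 \<le> card correct" using card_correct resilience by linarith
      ultimately have "\<forall>\<^sub>F k in sequentially. \<forall>j\<in>correct. sval n t (loc (ex k) j) (ptr_round coin r (\<not> s)) (\<not> s)"
        by (intro sval_spreads_from_senders[OF invoked order_refl])
      then show ?thesis ..
    qed
  qed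
qed

lemma eventually_stuck:
  assumes "\<forall>k. \<not> r < rnd (loc (ex k) j)" "r \<le> rnd (loc (ex K) j)"
  shows "\<forall>\<^sub>F k in sequentially. rnd (loc (ex k) j) = r"
  unfolding eventually_sequentially using assms rnd_mono by (metis le_antisym not_less order_trans)

lemma reaches_step6:
  assumes "1 \<le> r" "\<forall>j\<in>correct. r \<le> rnd (loc (ex K) j)" "q \<in> correct"
  shows "\<exists>k. r < rnd (loc (ex k) q) \<or> r = rnd (loc (ex k) q) \<and> pc (loc (ex k) q) = At6"
proof (cases "\<exists>k. r < rnd (loc (ex k) q)")
  case False
  then have stuck: "\<forall>\<^sub>F k in sequentially. rnd (loc (ex k) q) = r"
    using assms(2,3) by (intro eventually_stuck) auto
  obtain x where "\<forall>\<^sub>F k in sequentially. \<forall>j\<in>correct. sval n t (loc (ex k) j) (ptr_round coin r x) x"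
    using some_instance_succeeds[OF assms(1,2)] by blast
  with stuck have "\<forall>\<^sub>F k in sequentially. flag n t (loc (ex k) q) x"
    by eventually_elim (simp add: flag_ex \<open>q \<in> correct\<close>)
  from eventually_At6[OF assms(3) stuck this] stuck
  have "\<forall>\<^sub>F k in sequentially. r = rnd (loc (ex k) q) \<and> pc (loc (ex k) q) = At6"
    by eventually_elim simp
  then show ?thesis unfolding eventually_sequentially by blast
qed blast

lemma eventually_AUX_received:
  assumes "1 \<le> r" and reached: "\<forall>j\<in>correct. r \<le> rnd (loc (ex K) j)" and "q \<in> correct" "j \<in> correct"
  shows "\<exists>w. \<forall>\<^sub>F k in sequentially.
    (q, AUX r w) \<in> rcv (loc (ex k) j) \<and> sval n t (loc (ex k) j) (ptr_round coin r w) w"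
proof -
  obtain k where "r < rnd (loc (ex k) q) \<or> r = rnd (loc (ex k) q) \<and> pc (loc (ex k) q) = At6"
    using reaches_step6[OF assms(1-3)] by blast
  then obtain w where "bcast n q (AUX r w) \<subseteq> net (ex k)"
    using proc_inv.aux_bcast[OF proc_inv_ex[OF \<open>q \<in> correct\<close>] \<open>1 \<le> r\<close>] by blast
  then have sent: "(q, j, AUX r w) \<in> net (ex k)"
    using correct_lt[OF \<open>j \<in> correct\<close>] by (auto simp: bcast_def)
  have invoked: "\<forall>j\<in>correct. (ptr_round coin r w, w) \<in> inv (loc (ex K) j)"
    using reached \<open>1 \<le> r\<close> proc_inv.ptr_invoked[OF proc_inv_ex] by blast
  have "sval n t (loc (ex k) q) (ptr_round coin r w) w"
    using sent proc_inv.aux_sent_sval[OF proc_inv_ex[OF \<open>q \<in> correct\<close>]] by blast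
  with invoked \<open>q \<in> correct\<close>
  have "\<forall>\<^sub>F k in sequentially. \<forall>j\<in>correct. sval n t (loc (ex k) j) (ptr_round coin r w) w"
    by (rule sval_spreads)
  with eventually_received[OF \<open>q \<in> correct\<close> \<open>j \<in> correct\<close> sent]
  have "\<forall>\<^sub>F k in sequentially.
      (q, AUX r w) \<in> rcv (loc (ex k) j) \<and> sval n t (loc (ex k) j) (ptr_round coin r w) w"
    by eventually_elim (use \<open>j \<in> correct\<close> in simp)
  then show ?thesis ..
qed

lemma round_not_stuck:
  assumes "1 \<le> r" and reached: "\<forall>j\<in>correct. r \<le> rnd (loc (ex K) j)" and j: "j \<in> correct"
  shows "\<exists>k. r < rnd (loc (ex k) j)"
proof (rule ccontr)
  assume "\<not> ?thesis"
  then have stuck: "\<forall>\<^sub>F k in sequentially. rnd (loc (ex k) j) = r"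
    using reached j by (intro eventually_stuck) auto
  have "\<forall>q\<in>correct. \<exists>w. \<forall>\<^sub>F k in sequentially.
      (q, AUX r w) \<in> rcv (loc (ex k) j) \<and> sval n t (loc (ex k) j) (ptr_round coin r w) w"
    using eventually_AUX_received[OF assms(1,2) _ j] by blast
  then obtain ws where "\<forall>q\<in>correct. \<forall>\<^sub>F k in sequentially.
      (q, AUX r (ws q)) \<in> rcv (loc (ex k) j) \<and> sval n t (loc (ex k) j) (ptr_round coin r (ws q)) (ws q)"
    by (auto dest: bchoice)
  then have views: "\<forall>\<^sub>F k in sequentially. \<forall>q\<in>correct.
      (q, AUX r (ws q)) \<in> rcv (loc (ex k) j) \<and> sval n t (loc (ex k) j) (ptr_round coin r (ws q)) (ws q)"
    by (rule eventually_ball_finite[OF finite_correct])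
  obtain x where "\<forall>\<^sub>F k in sequentially. \<forall>j\<in>correct. sval n t (loc (ex k) j) (ptr_round coin r x) x"
    using some_instance_succeeds[OF assms(1,2)] by blast
  with stuck have "\<forall>\<^sub>F k in sequentially. flag n t (loc (ex k) j) x"
    by eventually_elim (simp add: flag_ex j)
  note At6 = eventually_At6[OF j stuck this]
  obtain S where S: "S \<subseteq> correct" "card S = n - t"
    using obtain_subset_with_card_n[OF card_correct] by blast
  from views stuck At6 have "\<forall>\<^sub>F k in sequentially. enabled n t j (ex k)"
  proof eventually_elim
    case (elim k)
    then have "view_ok n t (loc (ex k) j) S ws"
      using S correct_lt by (auto simp: view_ok_def flag_ex j)
    with elim show ?case by (auto simp: enabled_def)
  qed
  from stuck_not_enabled[OF j this stuck At6] show False .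
qed

lemma rounds_unbounded: "j \<in> correct \<Longrightarrow> \<exists>k. r \<le> rnd (loc (ex k) j)"
proof (induction r arbitrary: j)
  case (Suc r)
  show ?case
  proof (cases "r = 0")
    case True
    then show ?thesis using proc_inv.rnd_pos[OF proc_inv_ex[OF Suc.prems]] by auto
  next
    case False
    have "\<forall>\<^sub>F k in sequentially. r \<le> rnd (loc (ex k) j)" if "j \<in> correct" for j
      using Suc.IH[OF that] rnd_mono order_trans unfolding eventually_sequentially by blast
    then have "\<forall>\<^sub>F k in sequentially. \<forall>j\<in>correct. r \<le> rnd (loc (ex k) j)"
      by (intro eventually_ball_finite finite_correct) blast
    then obtain K where "\<forall>j\<in>correct. r \<le> rnd (loc (ex K) j)"
      unfolding eventually_sequentially by blast
    with False round_not_stuck[OF _ _ Suc.prems] show ?thesis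
      by (metis Suc_leI less_one not_le)
  qed
qed simp

end

section \<open>Safety after a decision\<close>

lemma supported_mem: "(v :: bool) \<in> V \<Longrightarrow> supported V v"
  by (cases v) (auto, (metis (full_types) insertI2 subsetI subset_antisym)+)

context a2_execution
begin

lemma decision_view:
  assumes j: "j \<in> correct" and "dec (loc (ex k) j) = Some (x, r)"
  shows "\<exists>k0 S ws. view_ok n t (loc (ex k0) j) S ws \<and> ws ` S = {x} \<and> rnd (loc (ex k0) j) = r \<and> coin r = x"
  using assms(2)
proof (induction k)
  case 0
  then show ?case using execution j by (simp add: execution_def init_state_def correct_def)
next
  case (Suc k)
  show ?case
  proof (cases "dec (loc (ex k) j) = Some (x, r)")
    case False
    then have "step6 n t coin j (ex k) (ex (Suc k))"
      using step_keeps_round[OF step_ex] Suc.prems by metis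
    then obtain S ws where "view_ok n t (loc (ex k) j) S ws"
      "dec (loc (ex (Suc k)) j) = (if ws ` S = {coin (rnd (loc (ex k) j))} \<and> dec (loc (ex k) j) = None
         then Some (coin (rnd (loc (ex k) j)), rnd (loc (ex k) j)) else dec (loc (ex k) j))"
      by (rule step6_dec)
    then show ?thesis using False Suc.prems by (auto split: if_splits)
  qed (rule Suc.IH)
qed

lemma quorums_intersect:
  assumes "S \<subseteq> {..<n}" "S' \<subseteq> {..<n}" "card S = n - t" "card S' = n - t"
  obtains q where "q \<in> S" "q \<in> S'" "q \<in> correct"
proof -
  have finite: "finite S" "finite S'" using assms(1,2) finite_subset by auto
  have "card (S \<union> S') \<le> n" using card_mono[OF _ Un_least[OF assms(1,2)]] by simp
  then have "t + 1 \<le> card (S \<inter> S')"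
    using card_Un_Int[OF finite] assms(3,4) resilience by linarith
  moreover have "card (S \<inter> S') - card F \<le> card (S \<inter> S' - F)"
    using finite_faulty by (rule diff_card_le_card_Diff)
  ultimately have "0 < card (S \<inter> S' - F)" using faulty_card by linarith
  then have "S \<inter> S' - F \<noteq> {}" by force
  then show ?thesis using that assms(1) by (auto simp: correct_def)
qed

lemma cnt_le_faulty:
  assumes "\<And>p. p < n \<Longrightarrow> (p, SVAL T x) \<in> rcv l \<Longrightarrow> p \<in> F"
  shows "cnt n l T x \<le> t"
proof -
  have "cnt n l T x \<le> card F"
    unfolding cnt_def using assms finite_faulty by (intro card_mono) auto
  then show ?thesis using faulty_card by linarith
qed

end

locale decided = a2_execution +
  fixes i v r ki S\<^sub>i ws\<^sub>i
  assumes decider: "i \<in> correct"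
    and decision_view: "view_ok n t (loc (ex ki) i) S\<^sub>i ws\<^sub>i" "ws\<^sub>i ` S\<^sub>i = {v}"
    and decision_round: "rnd (loc (ex ki) i) = r"
    and decision_coin: "coin r = v"
begin

text \<open>The tags T of the value-\<not>v instances EST[T] created in step (2) right after a round
  r' \<ge> r with coin v.\<close>
definition blocked :: "nat set" where
  "blocked = {Suc r' | r'. r \<le> r' \<and> coin r' = v}"

definition no_blocked_sval :: "nat \<Rightarrow> bool" where
  "no_blocked_sval k \<longleftrightarrow> (\<forall>q\<in>correct. \<forall>p. \<forall>T\<in>blocked. (q, p, SVAL T (\<not> v)) \<notin> net (ex k))"

lemma decision_round_pos: "1 \<le> r"
  using proc_inv.rnd_pos[OF proc_inv_ex[OF decider, of ki]] decision_round by simp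

lemma ptr_round_blocked: "r < r' \<Longrightarrow> ptr_round coin r' (\<not> v) \<in> blocked"
proof (induction r')
  case (Suc r')
  have "1 \<le> r'" using Suc.prems decision_round_pos by simp
  show ?case
  proof (cases "coin r' = v")
    case True
    then show ?thesis using Suc.prems \<open>1 \<le> r'\<close> unfolding blocked_def by auto
  next
    case False
    then have "r < r'" using Suc.prems decision_coin by (cases "r = r'") auto
    then show ?thesis using Suc.IH False \<open>1 \<le> r'\<close> by auto
  qed
qed simp

lemma decision_round_view:
  assumes j: "j \<in> correct" and view: "view_ok n t (loc (ex k) j) S ws" and "rnd (loc (ex k) j) = r"
  shows "v \<in> ws ` S"
proof (rule ccontr)
  assume "v \<notin> ws ` S"
  have "S \<subseteq> {..<n}" "S\<^sub>i \<subseteq> {..<n}" "card S = n - t" "card S\<^sub>i = n - t"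
    using view decision_view(1) by (simp_all add: view_ok_def)
  then obtain q where q: "q \<in> S" "q \<in> S\<^sub>i" "q \<in> correct" by (rule quorums_intersect)
  have "ws q \<noteq> v" using q(1) \<open>v \<notin> ws ` S\<close> by blast
  then have "ws q = (\<not> v)" by (cases "ws q") auto
  then have "(q, AUX r (\<not> v)) \<in> rcv (loc (ex k) j)"
    using view q(1) \<open>rnd (loc (ex k) j) = r\<close> unfolding view_ok_def by force
  then have "(q, j, AUX r (\<not> v)) \<in> net (ex (max k ki))"
    using proc_inv.rcv_sent[OF proc_inv_ex[OF j]] net_mono[of k "max k ki"] by auto
  moreover have "(q, AUX r v) \<in> rcv (loc (ex ki) i)"
    using decision_view q(2) decision_round unfolding view_ok_def by auto
  then have "(q, i, AUX r v) \<in> net (ex (max k ki))"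
    using proc_inv.rcv_sent[OF proc_inv_ex[OF decider]] net_mono[of ki "max k ki"] by auto
  ultimately show False
    using proc_inv.aux_unique[OF proc_inv_ex[OF q(3)]] by blast
qed

lemma cnt_blocked:
  assumes "no_blocked_sval k" "j \<in> correct" "T \<in> blocked"
  shows "cnt n (loc (ex k) j) T (\<not> v) \<le> t"
proof (rule cnt_le_faulty)
  fix p assume "p < n" "(p, SVAL T (\<not> v)) \<in> rcv (loc (ex k) j)"
  then have "(p, j, SVAL T (\<not> v)) \<in> net (ex k)"
    using proc_inv.rcv_sent[OF proc_inv_ex[OF \<open>j \<in> correct\<close>]] by blast
  then show "p \<in> F"
    using assms(1,3) \<open>p < n\<close> by (auto simp: no_blocked_sval_def correct_def)
qed

lemma later_round_view:
  assumes "no_blocked_sval k" "j \<in> correct" "view_ok n t (loc (ex k) j) S ws" "r < rnd (loc (ex k) j)"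
  shows "ws ` S = {v}"
proof -
  have "S \<noteq> {}" using assms(3) resilience by (auto simp: view_ok_def)
  moreover have "ws q = v" if "q \<in> S" for q
  proof (rule ccontr)
    assume "ws q \<noteq> v"
    then have "ws q = (\<not> v)" by (cases "ws q") auto
    then have "flag n t (loc (ex k) j) (\<not> v)"
      using assms(3) that unfolding view_ok_def by force
    then have "sval n t (loc (ex k) j) (ptr_round coin (rnd (loc (ex k) j)) (\<not> v)) (\<not> v)"
      by (simp add: flag_ex[OF assms(2)])
    then show False
      using cnt_blocked[OF assms(1,2) ptr_round_blocked[OF assms(4)]] by (simp add: sval_def)
  qed
  ultimately show ?thesis by auto
qed

lemma view_contains_decision:
  assumes "no_blocked_sval k" "j \<in> correct" "view_ok n t (loc (ex k) j) S ws" "r \<le> rnd (loc (ex k) j)"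
  shows "v \<in> ws ` S"
  using assms decision_round_view later_round_view by (cases "r = rnd (loc (ex k) j)") auto

lemma no_blocked_sval_0: "no_blocked_sval 0"
proof -
  have "T = 1" if "(q, p, SVAL T x) \<in> net (ex 0)" for q p T x
    using that execution by (auto simp: execution_def init_state_def bcast_mem)
  moreover have "1 < T" if "T \<in> blocked" for T
    using that decision_round_pos by (auto simp: blocked_def)
  ultimately show ?thesis by (fastforce simp: no_blocked_sval_def)
qed

lemma no_blocked_sval_Suc:
  assumes before: "no_blocked_sval k" shows "no_blocked_sval (Suc k)"
  unfolding no_blocked_sval_def
proof (intro ballI allI notI)
  fix q p T
  assume q: "q \<in> correct" and T: "T \<in> blocked" and sent: "(q, p, SVAL T (\<not> v)) \<in> net (ex (Suc k))"
  have "cnt n (loc (ex (Suc k)) q) T (\<not> v) \<le> t"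
  proof (rule cnt_le_faulty)
    fix p' assume "p' < n" "(p', SVAL T (\<not> v)) \<in> rcv (loc (ex (Suc k)) q)"
    then have "(p', q, SVAL T (\<not> v)) \<in> net (ex k)"
      using step_rcv_new[OF step_ex] proc_inv.rcv_sent[OF proc_inv_ex[OF q]] by blast
    then show "p' \<in> F" using before T \<open>p' < n\<close> by (auto simp: no_blocked_sval_def correct_def)
  qed
  moreover have "(q, p, SVAL T (\<not> v)) \<notin> net (ex k)" using before q T by (simp add: no_blocked_sval_def)
  ultimately have "T = Suc (rnd (loc (ex k) q)) \<and> coin (rnd (loc (ex k) q)) = v \<and>
      (\<exists>S ws. view_ok n t (loc (ex k) q) S ws \<and> \<not> supported (ws ` S) (coin (rnd (loc (ex k) q))))"
    using step_new_sval[OF step_ex sent] q by (auto simp: correct_def)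
  then obtain S ws where T_round: "T = Suc (rnd (loc (ex k) q))" and coin: "coin (rnd (loc (ex k) q)) = v"
    and view: "view_ok n t (loc (ex k) q) S ws" "\<not> supported (ws ` S) v"
    by auto
  have "r \<le> rnd (loc (ex k) q)" using T T_round by (auto simp: blocked_def)
  then have "v \<in> ws ` S" by (rule view_contains_decision[OF before q view(1)])
  with view(2) show False by (simp add: supported_mem)
qed

lemma no_blocked_sval: "no_blocked_sval k"
  by (induction k) (auto intro: no_blocked_sval_0 no_blocked_sval_Suc)

lemma neg_flag_false:
  assumes "j \<in> correct" "r < rnd (loc (ex k) j)"
  shows "\<not> flag n t (loc (ex k) j) (\<not> v)"
  using cnt_blocked[OF no_blocked_sval[of k] assms(1) ptr_round_blocked[OF assms(2)]]
  by (simp add: flag_ex[OF assms(1)] sval_def)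

lemma flag_eventually:
  assumes j: "j \<in> correct" and "r \<le> \<rho>" "rnd (loc (ex k1) j) = \<rho>"
  shows "\<exists>k2\<ge>k1. rnd (loc (ex k2) j) = \<rho> \<and> flag n t (loc (ex k2) j) v"
proof -
  obtain k where "Suc \<rho> \<le> rnd (loc (ex k) j)" using rounds_unbounded[OF j] by blast
  then have "\<rho> < rnd (loc (ex k) j)" by simp
  then obtain k2 where k2: "k2 \<ge> k1" "rnd (loc (ex k2) j) = \<rho>" "step6 n t coin j (ex k2) (ex (Suc k2))"
    using leaves_round[OF assms(3)] by blast
  then obtain S ws where "view_ok n t (loc (ex k2) j) S ws" by (elim step6_dec)
  moreover have "v \<in> ws ` S"
    using view_contains_decision[OF no_blocked_sval j calculation] k2(2) \<open>r \<le> \<rho>\<close> by simp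
  ultimately have "flag n t (loc (ex k2) j) v" by (auto simp: view_ok_def)
  with k2 show ?thesis by blast
qed

end

context a2_execution
begin

lemma decided_intro:
  assumes "i \<in> correct" "dec (loc (ex k) i) = Some (v, r)"
  obtains ki S ws where "decided n t F props coin ex i v r ki S ws"
proof -
  obtain ki S ws where "view_ok n t (loc (ex ki) i) S ws" "ws ` S = {v}" "rnd (loc (ex ki) i) = r" "coin r = v"
    using decision_view[OF assms] by blast
  then have "decided n t F props coin ex i v r ki S ws"
    by (intro decided.intro[OF a2_execution_axioms] decided_axioms.intro assms(1))
  then show thesis by (rule that)
qed

lemma agreement:
  assumes "i \<in> correct" "dec (loc (ex k) i) = Some (v, r)"
    and "j \<in> correct" "dec (loc (ex k') j) = Some (w, r')"
  shows "w = v"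
proof -
  obtain ki Si wsi where i: "decided n t F props coin ex i v r ki Si wsi"
    using assms(1,2) by (rule decided_intro)
  obtain kj Sj wsj where j: "decided n t F props coin ex j w r' kj Sj wsj"
    using assms(3,4) by (rule decided_intro)
  show ?thesis
  proof (cases "r \<le> r'")
    case True
    then have "v \<in> wsj ` Sj"
      using decided.view_contains_decision[OF i decided.no_blocked_sval[OF i] assms(3)
          decided.decision_view(1)[OF j]] decided.decision_round[OF j] by simp
    then show ?thesis using decided.decision_view(2)[OF j] by simp
  next
    case False
    then have "w \<in> wsi ` Si"
      using decided.view_contains_decision[OF j decided.no_blocked_sval[OF j] assms(1)
          decided.decision_view(1)[OF i]] decided.decision_round[OF i] by simp
    then show ?thesis using decided.decision_view(2)[OF i] by simp
  qed
qed

end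

theorem lemma13:
  fixes n t :: nat and F :: "nat set" and props coin :: "nat \<Rightarrow> bool"
    and ex :: "nat \<Rightarrow> gstate" and i k r :: nat and v :: bool
  assumes "3 * t < n" and "F \<subseteq> {..<n}" and "card F \<le> t"
    and "execution n t F props coin ex"
    and "i < n" and "i \<notin> F" and "dec (loc (ex k) i) = Some (v, r)"
  shows "(\<forall>j \<rho> k1. j < n \<and> j \<notin> F \<and> r \<le> \<rho> \<and> rnd (loc (ex k1) j) = \<rho> \<longrightarrow>
             (\<exists>k2\<ge>k1. rnd (loc (ex k2) j) = \<rho> \<and> flag n t (loc (ex k2) j) v))
       \<and> (\<forall>j k1 r'. j < n \<and> j \<notin> F \<longrightarrow> dec (loc (ex k1) j) \<noteq> Some (\<not> v, r'))
       \<and> (\<forall>j \<rho> k1. j < n \<and> j \<notin> F \<and> r < \<rho> \<and> rnd (loc (ex k1) j) = \<rho> \<longrightarrow>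
             \<not> flag n t (loc (ex k1) j) (\<not> v))"
proof -
  interpret a2_execution n t F props coin ex
    using assms(1-4) by (rule a2_execution.intro)
  have correct: "j \<in> correct \<longleftrightarrow> j < n \<and> j \<notin> F" for j
    by (simp add: correct_def)
  obtain ki S ws where decided: "decided n t F props coin ex i v r ki S ws"
    using assms(5-7) correct by (blast intro: decided_intro)
  have "\<not> dec (loc (ex k1) j) = Some (\<not> v, r')" if "j \<in> correct" for j k1 r'
    using agreement[of i k v r j k1 "\<not> v" r'] that assms(5-7) correct by auto
  then show ?thesis
    using decided.flag_eventually[OF decided] decided.neg_flag_false[OF decided] correct by blast
qed

end
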